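(* For any $k,n\in\mathbb{N}$, we have \begin{align*} &\mathrm{reg}_{\overset{t}{\mathbin{\sqcup\!\sqcup}}}\left(\sum\limits_{w\in A^{\ast}\cap\mathfrak{h}^1\atop d_x(w)=k,d_y(w)=n}w\right)=\sum\limits_{i=1}^{n}(-1)^{i-1}t^{n-i}\sum\limits_{k_1+\cdots+k_{i}=k+n\atop k_1\geqslant k+1,k_2,\ldots,k_{i}\geqslant 1}\binom{k_1}{k+1}z_{k_1}\cdots z_{k_{i}}. \end{align*}
   Context: Let $A=\{x,y\}$ be an alphabet of two noncommutative letters, $A^{\ast}$ the set of words, $\mathfrak{h}_t=\mathbb{Q}[t]\langle A\rangle$, $\mathfrak{h}^1_t=\mathbb{Q}[t]+\mathfrak{h}_ty$, $\mathfrak{h}^0_t=\mathbb{Q}[t]+x\mathfrak{h}_ty$, $\mathfrak{h}^1=\mathbb{Q}+\mathbb{Q}\langle A\rangle y$; $z_k=x^{k-1}y$; for a word $w$, $d_a(w)$ is the number of occurrences of the letter $a$ in $w$. The $t$-shuffle product $\overset{t}{\mathbin{\sqcup\!\sqcup}}$ on $\mathfrak{h}_t$ is $\mathbb{Q}[t]$-bilinear with $1\overset{t}{\mathbin{\sqcup\!\sqcup}} w=w\overset{t}{\mathbin{\sqcup\!\sqcup}} 1=w$ and $aw_1\overset{t}{\mathbin{\sqcup\!\sqcup}} bw_2=a(w_1\overset{t}{\mathbin{\sqcup\!\sqcup}} bw_2)+b(aw_1\overset{t}{\mathbin{\sqcup\!\sqcup}} w_2)-\delta(w_1)\rho(a)bw_2-\delta(w_2)\rho(b)aw_1$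 for words $w_1,w_2$ and letters $a,b$, where $\delta(w)=1$ if $w$ is the empty word and $0$ otherwise, $\rho(x)=0$, $\rho(y)=tx$. As $\overset{t}{\mathbin{\sqcup\!\sqcup}}$-algebras, $\mathfrak{h}_t^1=\mathfrak{h}_t^0[y]$, i.e. every $w\in\mathfrak{h}^1_t$ is uniquely $w=\sum_{i\ge0}w_i\overset{t}{\mathbin{\sqcup\!\sqcup}} y^{\overset{t}{\mathbin{\sqcup\!\sqcup}} i}$ with $w_i\in\mathfrak{h}^0_t$; the $t$-shuffle regularization $\mathrm{reg}_{\overset{t}{\mathbin{\sqcup\!\sqcup}}}:\mathfrak{h}^1_t\to\mathfrak{h}^0_t$ is defined by $w\mapsto w_0$. *)

theory Defs
  imports Main "HOL-Computational_Algebra.Polynomial"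
begin

datatype letter = X | Y

type_synonym word = "letter list"

(* elements of h_t = Q[t]<A>: finitely supported maps words -> Q[t] *)
type_synonym ht = "word \<Rightarrow> rat poly"

definition supp :: "ht \<Rightarrow> word set" where
  "supp f = {w. f w \<noteq> 0}"

definition single :: "word \<Rightarrow> ht" where
  "single w = (\<lambda>u. if u = w then 1 else 0)"

definition lprefix :: "letter \<Rightarrow> ht \<Rightarrow> ht" where
  "lprefix a f = (\<lambda>u. case u of [] \<Rightarrow> 0 | b # v \<Rightarrow> if b = a then f v else 0)"

fun rho :: "letter \<Rightarrow> word \<Rightarrow> ht" where
  "rho X w = (\<lambda>u. 0)"
| "rho Y w = (\<lambda>u. if u = X # w then [:0, 1:] else 0)"

fun wsh :: "word \<Rightarrow> word \<Rightarrow> ht" where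
  "wsh [] w = single w"
| "wsh (a # w1) [] = single (a # w1)"
| "wsh (a # w1) (b # w2) =
     (\<lambda>u. lprefix a (wsh w1 (b # w2)) u + lprefix b (wsh (a # w1) w2) u
          - (if w1 = [] then rho a (b # w2) u else 0)
          - (if w2 = [] then rho b (a # w1) u else 0))"

definition tsh :: "ht \<Rightarrow> ht \<Rightarrow> ht" where
  "tsh f g = (\<lambda>u. \<Sum>v\<in>supp f. \<Sum>w\<in>supp g. f v * g w * wsh v w u)"

fun tpow :: "ht \<Rightarrow> nat \<Rightarrow> ht" where
  "tpow f 0 = single []"
| "tpow f (Suc i) = tsh (tpow f i) f"

definition h1t :: "ht \<Rightarrow> bool" where
  "h1t f \<longleftrightarrow> finite (supp f) \<and> (\<forall>w\<in>supp f. w = [] \<or> last w = Y)"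

definition h0t :: "ht \<Rightarrow> bool" where
  "h0t f \<longleftrightarrow> finite (supp f) \<and> (\<forall>w\<in>supp f. w = [] \<or> (hd w = X \<and> last w = Y))"

definition reg :: "ht \<Rightarrow> ht" where
  "reg f = (THE w0. \<exists>ws N. (\<forall>i. h0t (ws i)) \<and> (\<forall>i>N. ws i = (\<lambda>u. 0)) \<and>
      f = (\<lambda>u. \<Sum>i\<le>N. tsh (ws i) (tpow (single [Y]) i) u) \<and> w0 = ws 0)"

(* z_{k1} ... z_{ki}, with z_m = x^(m-1) y *)
definition zw :: "nat list \<Rightarrow> word" where
  "zw ks = concat (map (\<lambda>m. replicate (m - 1) X @ [Y]) ks)"

end

theory Submission
  imports Defs
begin

text \<open>
  Write \<partial>a f for the residual u \<mapsto> f (a u) of a series f by a letter a, and Q(i) = y^(sh i) / i!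
  (ydiv) for the divided t-shuffle powers of y. The t-shuffle obeys a twisted Leibniz rule for
  \<partial>y and \<partial>x, whence \<partial>y Q(i) = Q(i - 1) and \<partial>x Q(i) = -t Q(i - 1) for i \<ge> 2. Applying \<partial>y
  repeatedly shows that a decomposition f = \<Sum>i. c(i) sh Q(i) with all c(i) in h0_t is unique,
  so that reg f = c(0).

  Let S(k, n) be the sum of words on the left and R(k, m) (rhs) the right-hand side with n
  replaced by m. It suffices to show S(k, n) = \<Sum>i<n. R(k, n - i) sh Q(i) (yconv), by induction on
  k + n comparing residuals: \<partial>y S(k, n) = S(k, n - 1) and \<partial>x S(k, n) = S(k - 1, n), while Pascal's
  rule for (k1 choose k + 1) gives \<partial>x R(k, m) = t R(k, m - 1) + R(k - 1, m), and \<partial>y R(k, m) = 0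
  for k \<ge> 1. For k = 0 the residuals of R(0, m) involve the alternating sum U(m) (altsum) over
  all compositions of m, which satisfies \<Sum>i<m. U(m - i) sh Q(i) = Q(m).
\<close>

section \<open>The t-shuffle letter by letter\<close>

definition tvar :: "rat poly" where
  "tvar = [:0, 1:]"

lemma lprefix_Nil [simp]: "lprefix a f [] = 0"
  by (simp add: lprefix_def)

lemma lprefix_Cons [simp]: "lprefix a f (b # u) = (if b = a then f u else 0)"
  by (simp add: lprefix_def)

lemma rho_Nil [simp]: "rho a w [] = 0"
  by (cases a) auto

lemma rho_Cons_Y [simp]: "rho a w (Y # u) = 0"
  by (cases a) auto

lemma rho_Cons_X [simp]: "rho a w (X # u) = (if a = Y \<and> u = w then tvar else 0)"
  by (cases a) (auto simp: tvar_def)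

lemma wsh_right_Nil [simp]: "wsh v [] = single v"
  by (cases v) auto

lemma wsh_at_Nil: "wsh v w [] = (if v = [] \<and> w = [] then 1 else 0)"
  by (cases v; cases w) (auto simp: single_def)

lemma wsh_at_Cons_Y:
  "wsh v w (Y # u) = lprefix Y (\<lambda>v'. wsh v' w u) v + lprefix Y (\<lambda>w'. wsh v w' u) w"
proof (cases v; cases w)
  fix a b v' w' assume "v = a # v'" "w = b # w'"
  then show ?thesis by (cases a; cases b) auto
qed (auto simp: single_def)

lemma wsh_at_Cons_X:
  "wsh v w (X # u) = lprefix X (\<lambda>v'. wsh v' w u) v + lprefix X (\<lambda>w'. wsh v w' u) w
     - (if v = [Y] \<and> w \<noteq> [] then tvar * single w u else 0)
     - (if w = [Y] \<and> v \<noteq> [] then tvar * single v u else 0)"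
proof (cases v; cases w)
  fix a b v' w' assume "v = a # v'" "w = b # w'"
  then show ?thesis by (cases a; cases b) (auto simp: single_def tvar_def one_pCons)
qed (auto simp: single_def)

lemma finite_words_of_length: "finite {u :: word. length u = n}"
proof -
  have "(UNIV :: letter set) = {X, Y}"
    using letter.exhaust by auto
  then have "finite (UNIV :: letter set)"
    by (metis finite.emptyI finite_insert)
  then show ?thesis
    using finite_lists_length_eq[of "UNIV :: letter set" n] by simp
qed

lemma single_apply: "single w u = (if u = w then 1 else 0)"
  by (simp add: single_def)

lemma single_at_self [simp]: "single w w = 1"
  by (simp add: single_def)

lemma supp_single: "supp (single w) = {w}"
  by (auto simp: supp_def single_def)

lemma residual_Y_single_Y: "(\<lambda>w. single [Y] (Y # w)) = single []"
  by (auto simp: single_def)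

lemma supp_zero [simp]: "supp (\<lambda>v. 0) = {}"
  by (simp add: supp_def)

lemma sum_supp_mult_if_eq:
  assumes "finite (supp f)"
  shows "(\<Sum>v\<in>supp f. f v * (if v = x then c else 0)) = f x * c"
proof -
  have "(\<Sum>v\<in>supp f. f v * (if v = x then c else 0)) = (\<Sum>v\<in>supp f. if v = x then f x * c else 0)"
    by (rule sum.cong) auto
  also have "\<dots> = f x * c"
    using assms by (auto simp: supp_def)
  finally show ?thesis .
qed

lemma sum_supp_mult_single:
  "finite (supp g) \<Longrightarrow> (\<Sum>w\<in>supp g. g w * single w u) = g u"
  using sum_supp_mult_if_eq[of g u 1] by (simp add: single_def eq_commute)

lemma supp_residual: "Cons a -` supp f = supp (\<lambda>v. f (a # v))"
  by (auto simp: supp_def)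

lemma finite_supp_scale: "finite (supp f) \<Longrightarrow> finite (supp (\<lambda>v. p * f v))"
  by (rule finite_subset[of _ "supp f"]) (auto simp: supp_def)

lemma finite_supp_diff:
  "finite (supp f) \<Longrightarrow> finite (supp g) \<Longrightarrow> finite (supp (\<lambda>v. f v - g v))"
  by (rule finite_subset[of _ "supp f \<union> supp g"]) (auto simp: supp_def)

lemma sum_lprefix:
  assumes "finite V"
  shows "(\<Sum>v\<in>V. lprefix a F v) = (\<Sum>v\<in>Cons a -` V. F v)"
proof -
  have "(\<Sum>v\<in>Cons a -` V. F v) = (\<Sum>v\<in>Cons a ` (Cons a -` V). F (tl v))"
    by (subst sum.reindex) (auto simp: inj_on_def)
  also have "\<dots> = (\<Sum>v\<in>V. lprefix a F v)"
    by (rule sum.mono_neutral_cong_left) (auto simp: assms lprefix_def split: list.splits)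
  finally show ?thesis by simp
qed

lemma tsh_at_Nil:
  assumes "finite (supp f)" "finite (supp g)"
  shows "tsh f g [] = f [] * g []"
proof -
  have "tsh f g [] = (\<Sum>v\<in>supp f. f v * (if v = [] then (\<Sum>w\<in>supp g. g w * (if w = [] then 1 else 0)) else 0))"
    unfolding tsh_def wsh_at_Nil
    by (rule sum.cong) (auto simp: sum_distrib_left intro!: sum.cong)
  also have "\<dots> = f [] * g []"
    using sum_supp_mult_if_eq[OF assms(1)] sum_supp_mult_if_eq[OF assms(2)] by simp
  finally show ?thesis .
qed

lemma sum_tsh_lprefix_left:
  assumes "finite (supp f)"
  shows "(\<Sum>v\<in>supp f. \<Sum>w\<in>supp g. f v * g w * lprefix a (\<lambda>v'. wsh v' w u) v)
       = tsh (\<lambda>v. f (a # v)) g u"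
proof -
  have "(\<Sum>v\<in>supp f. \<Sum>w\<in>supp g. f v * g w * lprefix a (\<lambda>v'. wsh v' w u) v)
      = (\<Sum>v\<in>supp f. lprefix a (\<lambda>v'. \<Sum>w\<in>supp g. f (a # v') * g w * wsh v' w u) v)"
    by (intro sum.cong refl) (auto simp: lprefix_def split: list.split)
  also have "\<dots> = tsh (\<lambda>v. f (a # v)) g u"
    unfolding sum_lprefix[OF assms] supp_residual tsh_def ..
  finally show ?thesis .
qed

lemma sum_tsh_lprefix_right:
  assumes "finite (supp g)"
  shows "(\<Sum>v\<in>supp f. \<Sum>w\<in>supp g. f v * g w * lprefix a (\<lambda>w'. wsh v w' u) w)
       = tsh f (\<lambda>w. g (a # w)) u"
proof -
  have "(\<Sum>v\<in>supp f. \<Sum>w\<in>supp g. f v * g w * lprefix a (\<lambda>w'. wsh v w' u) w)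
      = (\<Sum>v\<in>supp f. \<Sum>w\<in>supp g. lprefix a (\<lambda>w'. f v * g (a # w') * wsh v w' u) w)"
    by (intro sum.cong refl) (auto simp: lprefix_def split: list.split)
  also have "\<dots> = tsh f (\<lambda>w. g (a # w)) u"
    unfolding sum_lprefix[OF assms] supp_residual tsh_def ..
  finally show ?thesis .
qed

lemma tsh_at_Cons_Y:
  assumes "finite (supp f)" "finite (supp g)"
  shows "tsh f g (Y # u) = tsh (\<lambda>v. f (Y # v)) g u + tsh f (\<lambda>w. g (Y # w)) u"
  unfolding tsh_def wsh_at_Cons_Y
  using sum_tsh_lprefix_left[OF assms(1)] sum_tsh_lprefix_right[OF assms(2)]
  by (simp add: tsh_def distrib_left sum.distrib)

lemma sum_tsh_rho_term:
  assumes "finite (supp f)" "finite (supp g)"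
  shows "(\<Sum>v\<in>supp f. \<Sum>w\<in>supp g. f v * g w * (if v = [Y] \<and> w \<noteq> [] then tvar * single w u else 0))
        = tvar * f [Y] * (if u = [] then 0 else g u)"
proof -
  have "(\<Sum>v\<in>supp f. \<Sum>w\<in>supp g. f v * g w * (if v = [Y] \<and> w \<noteq> [] then tvar * single w u else 0))
      = (\<Sum>v\<in>supp f. f v * (if v = [Y] then (\<Sum>w\<in>supp g. g w * single w u) * (if u = [] then 0 else tvar) else 0))"
  proof (intro sum.cong refl)
    fix v
    have e: "\<And>w. (if v = [Y] \<and> w \<noteq> [] then tvar * single w u else 0)
        = (if v = [Y] then single w u * (if u = [] then 0 else tvar) else 0)"
      by (auto simp: single_apply)
    show "(\<Sum>w\<in>supp g. f v * g w * (if v = [Y] \<and> w \<noteq> [] then tvar * single w u else 0))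
      = f v * (if v = [Y] then (\<Sum>w\<in>supp g. g w * single w u) * (if u = [] then 0 else tvar) else 0)"
      unfolding e by (simp add: sum_distrib_left sum_distrib_right mult_ac)
  qed
  also have "\<dots> = tvar * f [Y] * (if u = [] then 0 else g u)"
    using sum_supp_mult_if_eq[OF assms(1)] sum_supp_mult_single[OF assms(2)] by simp
  finally show ?thesis .
qed

lemma tsh_at_Cons_X:
  assumes "finite (supp f)" "finite (supp g)"
  shows "tsh f g (X # u) = tsh (\<lambda>v. f (X # v)) g u + tsh f (\<lambda>w. g (X # w)) u
     - tvar * f [Y] * (if u = [] then 0 else g u) - tvar * g [Y] * (if u = [] then 0 else f u)"
proof -
  have "tsh f g (X # u) = (\<Sum>v\<in>supp f. \<Sum>w\<in>supp g. f v * g w * lprefix X (\<lambda>v'. wsh v' w u) v)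
     + (\<Sum>v\<in>supp f. \<Sum>w\<in>supp g. f v * g w * lprefix X (\<lambda>w'. wsh v w' u) w)
     - (\<Sum>v\<in>supp f. \<Sum>w\<in>supp g. f v * g w * (if v = [Y] \<and> w \<noteq> [] then tvar * single w u else 0))
     - (\<Sum>w\<in>supp g. \<Sum>v\<in>supp f. g w * f v * (if w = [Y] \<and> v \<noteq> [] then tvar * single v u else 0))"
    unfolding tsh_def wsh_at_Cons_X
    by (subst (4) sum.swap) (simp add: algebra_simps sum.distrib sum_subtractf)
  then show ?thesis
    using sum_tsh_lprefix_left[OF assms(1)] sum_tsh_lprefix_right[OF assms(2)]
      sum_tsh_rho_term[OF assms] sum_tsh_rho_term[OF assms(2,1)] by simp
qed

lemma tsh_eq_sum_superset:
  assumes "finite V" "supp f \<subseteq> V" "finite W" "supp g \<subseteq> W"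
  shows "tsh f g u = (\<Sum>v\<in>V. \<Sum>w\<in>W. f v * g w * wsh v w u)"
proof -
  have "tsh f g u = (\<Sum>v\<in>V. \<Sum>w\<in>supp g. f v * g w * wsh v w u)"
    unfolding tsh_def by (rule sum.mono_neutral_left) (use assms in \<open>auto simp: supp_def\<close>)
  also have "\<dots> = (\<Sum>v\<in>V. \<Sum>w\<in>W. f v * g w * wsh v w u)"
    by (intro sum.cong refl sum.mono_neutral_left) (use assms in \<open>auto simp: supp_def\<close>)
  finally show ?thesis .
qed

lemma tsh_lincomb_left:
  assumes "finite (supp f1)" "finite (supp f2)" "finite (supp g)"
  shows "tsh (\<lambda>v. p * f1 v + q * f2 v) g u = p * tsh f1 g u + q * tsh f2 g u"
proof -
  let ?V = "supp f1 \<union> supp f2"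
  have "finite ?V" using assms by simp
  moreover have "supp (\<lambda>v. p * f1 v + q * f2 v) \<subseteq> ?V" "supp f1 \<subseteq> ?V" "supp f2 \<subseteq> ?V"
    by (auto simp: supp_def)
  ultimately show ?thesis
    using tsh_eq_sum_superset[of ?V _ "supp g" g u] assms(3)
    by (simp add: algebra_simps sum.distrib sum_distrib_left)
qed

lemma tsh_lincomb_right:
  assumes "finite (supp f)" "finite (supp g1)" "finite (supp g2)"
  shows "tsh f (\<lambda>v. p * g1 v + q * g2 v) u = p * tsh f g1 u + q * tsh f g2 u"
proof -
  let ?W = "supp g1 \<union> supp g2"
  have "finite ?W" using assms by simp
  moreover have "supp (\<lambda>v. p * g1 v + q * g2 v) \<subseteq> ?W" "supp g1 \<subseteq> ?W" "supp g2 \<subseteq> ?W"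
    by (auto simp: supp_def)
  ultimately show ?thesis
    using tsh_eq_sum_superset[of "supp f" f ?W _ u] assms(1)
    by (simp add: algebra_simps sum.distrib sum_distrib_left)
qed

lemma tsh_zero_left [simp]: "tsh (\<lambda>v. 0) g u = 0"
  by (simp add: tsh_def supp_def)

lemma tsh_zero_right [simp]: "tsh f (\<lambda>v. 0) u = 0"
  by (simp add: tsh_def)

lemma tsh_scale_left: "finite (supp f) \<Longrightarrow> finite (supp g) \<Longrightarrow> tsh (\<lambda>v. p * f v) g u = p * tsh f g u"
  using tsh_lincomb_left[of f "\<lambda>v. 0" g p 0 u] by simp

lemma tsh_scale_right: "finite (supp f) \<Longrightarrow> finite (supp g) \<Longrightarrow> tsh f (\<lambda>v. p * g v) u = p * tsh f g u"
  using tsh_lincomb_right[of f g "\<lambda>v. 0" p 0 u] by simp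

lemma tsh_diff_left:
  "finite (supp f1) \<Longrightarrow> finite (supp f2) \<Longrightarrow> finite (supp g) \<Longrightarrow>
    tsh (\<lambda>v. f1 v - f2 v) g u = tsh f1 g u - tsh f2 g u"
  using tsh_lincomb_left[of f1 f2 g 1 "-1" u] by simp

lemma tsh_single_Nil_right: "finite (supp f) \<Longrightarrow> tsh f (single []) u = f u"
  unfolding tsh_def supp_single by (simp add: sum_supp_mult_single)

lemma tsh_single_Nil_left: "finite (supp g) \<Longrightarrow> tsh (single []) g u = g u"
  unfolding tsh_def supp_single by (simp add: sum_supp_mult_single)

section \<open>Divided powers of y and the regularization\<close>

fun ydiv :: "nat \<Rightarrow> ht" where
  "ydiv 0 = single []"
| "ydiv (Suc 0) = single [Y]"
| "ydiv (Suc (Suc i)) = (\<lambda>u. lprefix Y (ydiv (Suc i)) u - tvar * lprefix X (ydiv (Suc i)) u)"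

lemma ydiv_at_Nil: "ydiv i [] = (if i = 0 then 1 else 0)"
  by (induction i rule: ydiv.induct) (auto simp: single_def)

lemma ydiv_at_Cons_Y: "ydiv i (Y # u) = (if i = 0 then 0 else ydiv (i - 1) u)"
  by (cases i rule: ydiv.cases) (auto simp: single_def)

lemma ydiv_at_Cons_X: "ydiv i (X # u) = (if i \<le> 1 then 0 else - tvar * ydiv (i - 1) u)"
  by (cases i rule: ydiv.cases) (auto simp: single_def)

lemma ydiv_at_single_Y: "ydiv i [Y] = (if i = 1 then 1 else 0)"
  by (simp add: ydiv_at_Cons_Y ydiv_at_Nil)

lemma residual_Y_ydiv: "(\<lambda>v. ydiv i (Y # v)) = (if i = 0 then (\<lambda>v. 0) else ydiv (i - 1))"
  by (auto simp: ydiv_at_Cons_Y)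

lemma residual_X_ydiv:
  "(\<lambda>v. ydiv i (X # v)) = (if i \<le> 1 then (\<lambda>v. 0) else (\<lambda>v. - tvar * ydiv (i - 1) v))"
  by (auto simp: ydiv_at_Cons_X)

lemma ydiv_eq_0_if_length: "length u \<noteq> i \<Longrightarrow> ydiv i u = 0"
proof (induction i arbitrary: u rule: ydiv.induct)
  case (3 i)
  then show ?case by (cases u) auto
qed (auto simp: single_def)

lemma finite_supp_ydiv: "finite (supp (ydiv i))"
proof -
  have "supp (ydiv i) \<subseteq> {u. length u = i}"
    using ydiv_eq_0_if_length by (auto simp: supp_def)
  then show ?thesis
    using finite_words_of_length finite_subset by blast
qed

lemma word_fun_eqI:
  assumes "f [] = g []" "\<And>u. f (X # u) = g (X # u)" "\<And>u. f (Y # u) = g (Y # u)"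
  shows "f = g"
proof
  fix u
  show "f u = g u"
    using assms by (cases u) (auto, metis letter.exhaust)
qed

lemma tsh_ydiv_single_Y: "tsh (ydiv i) (single [Y]) = (\<lambda>u. of_nat (i + 1) * ydiv (i + 1) u)"
proof (induction i)
  case 0
  show ?case
    by (rule ext) (simp add: tsh_single_Nil_left supp_single)
next
  case (Suc i)
  show ?case
  proof (rule word_fun_eqI)
    fix u
    have "tsh (ydiv (Suc i)) (single [Y]) (Y # u)
        = tsh (ydiv i) (single [Y]) u + tsh (ydiv (Suc i)) (single []) u"
      using tsh_at_Cons_Y[of "ydiv (Suc i)" "single [Y]" u]
      by (simp add: finite_supp_ydiv supp_single residual_Y_ydiv residual_Y_single_Y)
    then show "tsh (ydiv (Suc i)) (single [Y]) (Y # u) = of_nat (Suc i + 1) * ydiv (Suc i + 1) (Y # u)"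
      using Suc.IH by (simp add: tsh_single_Nil_right finite_supp_ydiv ydiv_at_Cons_Y algebra_simps)
  next
    fix u
    have "tsh (ydiv (Suc i)) (single [Y]) (X # u) = tsh (\<lambda>v. ydiv (Suc i) (X # v)) (single [Y]) u
       - tvar * ydiv (Suc i) [Y] * (if u = [] then 0 else single [Y] u)
       - tvar * (if u = [] then 0 else ydiv (Suc i) u)"
      using tsh_at_Cons_X[of "ydiv (Suc i)" "single [Y]" u]
      by (simp add: finite_supp_ydiv supp_single single_apply)
    also have "\<dots> = of_nat (Suc i + 1) * ydiv (Suc i + 1) (X # u)"
    proof (cases "i = 0")
      case True
      then show ?thesis by (auto simp: residual_X_ydiv ydiv_at_Cons_X single_apply)
    next
      case False
      have "tsh (\<lambda>v. ydiv (Suc i) (X # v)) (single [Y]) u = - tvar * tsh (ydiv i) (single [Y]) u"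
        using False tsh_scale_left[of "ydiv i" "single [Y]" "- tvar" u]
        by (simp add: residual_X_ydiv finite_supp_ydiv supp_single)
      moreover have "ydiv (Suc i) [] = 0" "ydiv (Suc i) [Y] = 0"
        using False by (simp_all add: ydiv_at_Nil ydiv_at_single_Y)
      ultimately show ?thesis
        using Suc.IH by (auto simp: ydiv_at_Cons_X algebra_simps)
    qed
    finally show "tsh (ydiv (Suc i)) (single [Y]) (X # u) = of_nat (Suc i + 1) * ydiv (Suc i + 1) (X # u)" .
  qed (use tsh_at_Nil[of "ydiv (Suc i)" "single [Y]"] in
      \<open>simp add: finite_supp_ydiv supp_single ydiv_at_Nil\<close>)
qed

lemma tpow_single_Y: "tpow (single [Y]) i = (\<lambda>u. of_nat (fact i) * ydiv i u)"
proof (induction i)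
  case (Suc i)
  have "tpow (single [Y]) (Suc i) = tsh (\<lambda>u. of_nat (fact i) * ydiv i u) (single [Y])"
    using Suc by simp
  also have "\<dots> = (\<lambda>u. of_nat (fact i) * tsh (ydiv i) (single [Y]) u)"
    by (rule ext, rule tsh_scale_left) (simp_all add: finite_supp_ydiv supp_single)
  finally show ?case
    by (simp add: tsh_ydiv_single_Y algebra_simps)
qed simp

lemma h0t_finite_supp: "h0t f \<Longrightarrow> finite (supp f)"
  by (simp add: h0t_def)

lemma h0t_at_Cons_Y: "h0t f \<Longrightarrow> f (Y # u) = 0"
  by (auto simp: h0t_def supp_def)

lemma sum_tsh_ydiv_eq_0_imp:
  assumes "\<And>i. finite (supp (c i))" "\<And>i u. c i (Y # u) = 0"
    and "\<And>u. (\<Sum>i\<le>N. tsh (c i) (ydiv i) u) = 0"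
  shows "\<forall>i\<le>N. c i = (\<lambda>u. 0)"
  using assms
proof (induction N arbitrary: c)
  case 0
  then show ?case
    by (auto simp: tsh_single_Nil_right)
next
  case (Suc N)
  have "(\<Sum>j\<le>N. tsh (c (Suc j)) (ydiv j) u) = 0" for u
  proof -
    have "(\<lambda>v. c i (Y # v)) = (\<lambda>v. 0)" for i
      using Suc.prems(2) by auto
    then have "(\<Sum>i\<le>Suc N. tsh (c i) (ydiv i) (Y # u)) = (\<Sum>i\<le>Suc N. tsh (c i) (\<lambda>v. ydiv i (Y # v)) u)"
      by (simp add: tsh_at_Cons_Y[OF Suc.prems(1) finite_supp_ydiv])
    also have "\<dots> = (\<Sum>j\<le>N. tsh (c (Suc j)) (ydiv j) u)"
      by (subst sum.atMost_Suc_shift) (simp add: residual_Y_ydiv single_apply)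
    finally show ?thesis
      using Suc.prems(3) by simp
  qed
  then have tail: "\<forall>j\<le>N. c (Suc j) = (\<lambda>u. 0)"
    using Suc.IH[of "\<lambda>j. c (Suc j)"] Suc.prems by blast
  have "(\<Sum>i\<le>Suc N. tsh (c i) (ydiv i) u) = c 0 u" for u
    using tail by (subst sum.atMost_Suc_shift) (simp add: tsh_single_Nil_right Suc.prems(1))
  then have "c 0 = (\<lambda>u. 0)"
    using Suc.prems(3) by auto
  with tail show ?case
    by (metis Suc_le_mono not0_implies_Suc)
qed

lemma tsh_tpow_decomposition_unique:
  assumes "\<forall>i. h0t (ws i)" "\<forall>i. h0t (ws' i)"
    and "\<And>u. (\<Sum>i\<le>N. tsh (ws i) (tpow (single [Y]) i) u) = (\<Sum>i\<le>N. tsh (ws' i) (tpow (single [Y]) i) u)"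
  shows "ws 0 = ws' 0"
proof -
  define c where "c i = (\<lambda>u. of_nat (fact i) * (ws i u - ws' i u))" for i
  have fin: "finite (supp (ws i))" "finite (supp (ws' i))" for i
    using assms(1,2) by (auto intro: h0t_finite_supp)
  have "tsh (c i) (ydiv i) u = tsh (ws i) (tpow (single [Y]) i) u - tsh (ws' i) (tpow (single [Y]) i) u"
    for i u
  proof -
    have "tsh (c i) (ydiv i) u = of_nat (fact i) * tsh (\<lambda>u. ws i u - ws' i u) (ydiv i) u"
      unfolding c_def by (rule tsh_scale_left) (simp_all add: fin finite_supp_diff finite_supp_ydiv)
    also have "\<dots> = of_nat (fact i) * (tsh (ws i) (ydiv i) u - tsh (ws' i) (ydiv i) u)"
      by (simp add: tsh_diff_left fin finite_supp_ydiv)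
    finally show ?thesis
      unfolding tpow_single_Y by (simp add: tsh_scale_right fin finite_supp_ydiv algebra_simps)
  qed
  then have "(\<Sum>i\<le>N. tsh (c i) (ydiv i) u) = 0" for u
    using assms(3) by (simp add: sum_subtractf)
  moreover have "finite (supp (c i))" "c i (Y # u) = 0" for i u
    unfolding c_def using assms(1,2)
    by (simp_all add: finite_supp_scale finite_supp_diff fin h0t_at_Cons_Y)
  ultimately have "c 0 = (\<lambda>u. 0)"
    using sum_tsh_ydiv_eq_0_imp[of c N] by blast
  then show ?thesis
    by (auto simp: c_def fun_eq_iff)
qed

lemma reg_eqI:
  assumes "\<forall>i. h0t (ws i)" "\<forall>i>N. ws i = (\<lambda>u. 0)"
    and "f = (\<lambda>u. \<Sum>i\<le>N. tsh (ws i) (tpow (single [Y]) i) u)"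
  shows "reg f = ws 0"
  unfolding reg_def
proof (rule the_equality)
  fix w0
  assume "\<exists>ws' N'. (\<forall>i. h0t (ws' i)) \<and> (\<forall>i>N'. ws' i = (\<lambda>u. 0)) \<and>
       f = (\<lambda>u. \<Sum>i\<le>N'. tsh (ws' i) (tpow (single [Y]) i) u) \<and> w0 = ws' 0"
  then obtain ws' N' where ws': "\<forall>i. h0t (ws' i)" "\<forall>i>N'. ws' i = (\<lambda>u. 0)"
    "f = (\<lambda>u. \<Sum>i\<le>N'. tsh (ws' i) (tpow (single [Y]) i) u)" "w0 = ws' 0"
    by blast
  define M where "M = max N N'"
  have extend: "(\<Sum>i\<le>K. tsh (vs i) (tpow (single [Y]) i) u) = (\<Sum>i\<le>M. tsh (vs i) (tpow (single [Y]) i) u)"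
    if "K \<le> M" "\<forall>i>K. vs i = (\<lambda>u. 0)" for vs K u
    by (rule sum.mono_neutral_left) (use that in auto)
  have "(\<Sum>i\<le>M. tsh (ws i) (tpow (single [Y]) i) u) = f u" for u
    using extend[of N ws u] assms(2) by (simp add: M_def assms(3))
  moreover have "(\<Sum>i\<le>M. tsh (ws' i) (tpow (single [Y]) i) u) = f u" for u
    using extend[of N' ws' u] ws'(2) by (simp add: M_def ws'(3))
  ultimately have "(\<Sum>i\<le>M. tsh (ws' i) (tpow (single [Y]) i) u) = (\<Sum>i\<le>M. tsh (ws i) (tpow (single [Y]) i) u)" for u
    by simp
  with ws'(1) assms(1) show "w0 = ws 0"
    unfolding ws'(4) by (rule tsh_tpow_decomposition_unique)
qed (use assms in blast)

definition yconv :: "(nat \<Rightarrow> ht) \<Rightarrow> nat \<Rightarrow> ht" where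
  "yconv F n u = (\<Sum>i<n. tsh (F (n - i)) (ydiv i) u)"

lemma reg_yconv:
  assumes "\<And>m. h0t (F m)" "1 \<le> n"
  shows "reg (yconv F n) = F n"
proof -
  define ws where "ws i = (if i < n then (\<lambda>u. [:inverse (fact i):] * F (n - i) u) else (\<lambda>u. 0))" for i
  have "\<forall>i. h0t (ws i)"
    using assms(1) by (auto simp: ws_def h0t_def supp_def intro: finite_subset[of _ "supp (F _)"])
  moreover have "\<forall>i>n. ws i = (\<lambda>u. 0)"
    by (simp add: ws_def)
  moreover have "yconv F n = (\<lambda>u. \<Sum>i\<le>n. tsh (ws i) (tpow (single [Y]) i) u)"
  proof
    fix u
    have "tsh (ws i) (tpow (single [Y]) i) u = tsh (F (n - i)) (ydiv i) u" if "i < n" for i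
    proof -
      have fin: "finite (supp (F (n - i)))"
        using assms(1) by (rule h0t_finite_supp)
      have "tsh (ws i) (tpow (single [Y]) i) u
          = [:inverse (fact i):] * (of_nat (fact i) * tsh (F (n - i)) (ydiv i) u)"
        unfolding tpow_single_Y ws_def using that fin
        by (simp only: if_True tsh_scale_left tsh_scale_right finite_supp_scale finite_supp_ydiv)
      also have "\<dots> = tsh (F (n - i)) (ydiv i) u"
        by (simp add: of_nat_poly one_pCons flip: mult.assoc)
      finally show ?thesis .
    qed
    then show "yconv F n u = (\<Sum>i\<le>n. tsh (ws i) (tpow (single [Y]) i) u)"
      by (simp add: yconv_def lessThan_Suc_atMost[symmetric] ws_def)
  qed
  ultimately have "reg (yconv F n) = ws 0"
    by (rule reg_eqI)
  then show ?thesis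
    using assms(2) by (simp add: ws_def)
qed

section \<open>Words as products of the letters z_k\<close>

fun zcomp :: "word \<Rightarrow> nat list" where
  "zcomp [] = []"
| "zcomp (Y # u) = 1 # zcomp u"
| "zcomp (X # u) = (case zcomp u of [] \<Rightarrow> [] | h # r \<Rightarrow> Suc h # r)"

definition comps :: "nat \<Rightarrow> nat list set" where
  "comps M = {ks. ks \<noteq> [] \<and> (\<forall>j\<in>set ks. 1 \<le> j) \<and> sum_list ks = M}"

lemma zw_Nil [simp]: "zw [] = []"
  by (simp add: zw_def)

lemma zw_Cons: "zw (m # ks) = replicate (m - 1) X @ Y # zw ks"
  by (simp add: zw_def)

lemma zcomp_replicate_X: "zcomp (replicate j X @ Y # v) = Suc j # zcomp v"
  by (induction j) auto

lemma zcomp_zw: "\<forall>j\<in>set ks. 1 \<le> j \<Longrightarrow> zcomp (zw ks) = ks"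
  by (induction ks) (auto simp: zw_Cons zcomp_replicate_X)

lemma length_zw: "\<forall>j\<in>set ks. 1 \<le> j \<Longrightarrow> length (zw ks) = sum_list ks"
  by (induction ks) (auto simp: zw_Cons)

lemma last_zw: "ks \<noteq> [] \<Longrightarrow> zw ks \<noteq> [] \<and> last (zw ks) = Y"
proof (induction ks)
  case (Cons m ks)
  then show ?case by (cases "ks = []") (auto simp: zw_Cons)
qed simp

lemma length_le_sum_list: "\<forall>j\<in>set ks. 1 \<le> j \<Longrightarrow> length ks \<le> sum_list ks"
  by (induction ks) auto

lemma comps_ne_Nil: "ks \<in> comps M \<Longrightarrow> ks \<noteq> []"
  by (simp add: comps_def)

lemma comps_length_le: "ks \<in> comps M \<Longrightarrow> length ks \<le> M"
  unfolding comps_def using length_le_sum_list by auto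

lemma comps_hd_length_le: "ks \<in> comps M \<Longrightarrow> hd ks + (length ks - 1) \<le> M"
proof (cases ks)
  case (Cons h r)
  assume "ks \<in> comps M"
  then show ?thesis
    using Cons length_le_sum_list[of r] by (auto simp: comps_def)
qed (simp add: comps_def)

lemma finite_comps: "finite (comps M)"
proof -
  have "comps M \<subseteq> {ks. set ks \<subseteq> {..M} \<and> length ks \<le> M}"
    unfolding comps_def using length_le_sum_list member_le_sum_list by fastforce
  then show ?thesis
    using finite_lists_length_le[of "{..M}" M] finite_subset by blast
qed

lemma zcomp_in_comps:
  "u \<noteq> [] \<Longrightarrow> last u = Y \<Longrightarrow> zcomp u \<in> comps (length u) \<and> zw (zcomp u) = u"
proof (induction u)
  case (Cons a u)
  show ?case
  proof (cases a)
    case Y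
    then show ?thesis
      using Cons by (cases "u = []") (auto simp: comps_def zw_Cons)
  next
    case X
    then have "zcomp u \<in> comps (length u) \<and> zw (zcomp u) = u"
      using Cons by (cases "u = []") auto
    moreover obtain h r where "zcomp u = h # r"
      using calculation by (cases "zcomp u") (auto simp: comps_def)
    ultimately show ?thesis
      using X by (cases h) (auto simp: comps_def zw_Cons)
  qed
qed simp

lemma eq_zw_iff:
  assumes "ks \<in> comps M"
  shows "u = zw ks \<longleftrightarrow> u \<noteq> [] \<and> last u = Y \<and> length u = M \<and> ks = zcomp u"
proof
  assume "u = zw ks"
  then show "u \<noteq> [] \<and> last u = Y \<and> length u = M \<and> ks = zcomp u"
    using assms last_zw length_zw zcomp_zw by (auto simp: comps_def)
next
  assume "u \<noteq> [] \<and> last u = Y \<and> length u = M \<and> ks = zcomp u"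
  then show "u = zw ks"
    using zcomp_in_comps by metis
qed

text \<open>By \<open>zsum_eq_sum_single\<close>, \<open>zsum c M = (\<Sum>ks\<in>comps M. c ks * zw ks)\<close>; stating it coefficientwise
  through the inverse \<open>zcomp\<close> of \<open>zw\<close> makes its residuals easy to read off.\<close>

definition zsum :: "(nat list \<Rightarrow> rat poly) \<Rightarrow> nat \<Rightarrow> ht" where
  "zsum c M u = (if u \<noteq> [] \<and> last u = Y \<and> length u = M then c (zcomp u) else 0)"

lemma sum_comps_single_zw:
  assumes "K \<subseteq> comps M"
  shows "(\<Sum>ks\<in>K. c ks * single (zw ks) u)
       = (if u \<noteq> [] \<and> last u = Y \<and> length u = M \<and> zcomp u \<in> K then c (zcomp u) else 0)"
proof -
  have "finite K"
    using assms finite_comps finite_subset by blast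
  moreover have "c ks * single (zw ks) u
      = (if zcomp u = ks then (if u \<noteq> [] \<and> last u = Y \<and> length u = M then c ks else 0) else 0)"
    if "ks \<in> K" for ks
    using that assms eq_zw_iff[of ks M u] by (auto simp: single_def)
  ultimately show ?thesis
    by simp
qed

lemma zsum_eq_sum_single: "zsum c M u = (\<Sum>ks\<in>comps M. c ks * single (zw ks) u)"
  unfolding sum_comps_single_zw[OF order_refl] zsum_def
  using zcomp_in_comps[of u] by auto

lemma zsum_at_Nil [simp]: "zsum c M [] = 0"
  by (simp add: zsum_def)

lemma zsum_at_Cons_X: "zsum c M (X # u) = zsum (\<lambda>ks. c (Suc (hd ks) # tl ks)) (M - 1) u"
proof (cases "u \<noteq> [] \<and> last u = Y \<and> length u = M - 1 \<and> M \<ge> 1")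
  case True
  then obtain h r where "zcomp u = h # r"
    using zcomp_in_comps[of u] by (cases "zcomp u") (auto simp: comps_def)
  then show ?thesis
    using True by (auto simp: zsum_def)
qed (auto simp: zsum_def)

lemma zsum_at_Cons_Y:
  "zsum c M (Y # u) = (if u = [] \<and> M = 1 then c [1] else 0) + zsum (\<lambda>ks. c (1 # ks)) (M - 1) u"
  by (cases "u = []") (auto simp: zsum_def)

lemma zsum_at_single_Y: "zsum c M [Y] = (if M = 1 then c [1] else 0)"
  by (simp add: zsum_at_Cons_Y)

lemma zsum_cong: "(\<And>ks. ks \<in> comps M \<Longrightarrow> c ks = c' ks) \<Longrightarrow> zsum c M u = zsum c' M u"
  by (metis zsum_def zcomp_in_comps)

lemma zsum_lincomb: "zsum (\<lambda>ks. p * c1 ks + q * c2 ks) M u = p * zsum c1 M u + q * zsum c2 M u"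
  by (simp add: zsum_def)

lemma zsum_zero: "zsum (\<lambda>ks. 0) M u = 0"
  by (simp add: zsum_def)

lemma finite_supp_zsum: "finite (supp (zsum c M))"
proof -
  have "supp (zsum c M) \<subseteq> {u. length u = M}"
    by (auto simp: supp_def zsum_def split: if_splits)
  then show ?thesis
    using finite_words_of_length finite_subset by blast
qed

section \<open>The right-hand side as a series\<close>

definition rhs_coeff :: "nat \<Rightarrow> nat \<Rightarrow> nat list \<Rightarrow> rat poly" where
  "rhs_coeff k m ks = (-1) ^ (length ks - 1) * tvar ^ (m - length ks) * of_nat (hd ks choose (k + 1))"

definition rhs :: "nat \<Rightarrow> nat \<Rightarrow> ht" where
  "rhs k m = zsum (rhs_coeff k m) (k + m)"

text \<open>\<open>altsum m\<close> is what \<open>rhs k m\<close> becomes for \<open>k = -1\<close>, where all binomial coefficients are \<open>1\<close>.\<close>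

definition alt_coeff :: "nat \<Rightarrow> nat list \<Rightarrow> rat poly" where
  "alt_coeff m ks = (-1) ^ (length ks - 1) * tvar ^ (m - length ks)"

definition altsum :: "nat \<Rightarrow> ht" where
  "altsum m = zsum (alt_coeff m) m"

lemma rhs_at_Nil [simp]: "rhs k m [] = 0"
  by (simp add: rhs_def)

lemma finite_supp_rhs: "finite (supp (rhs k m))"
  by (simp add: rhs_def finite_supp_zsum)

lemma rhs_0 [simp]: "rhs k 0 = (\<lambda>u. 0)"
proof
  fix u
  have "zsum (rhs_coeff k 0) k u = zsum (\<lambda>ks. 0) k u"
  proof (rule zsum_cong)
    fix ks
    assume "ks \<in> comps k"
    then have "hd ks \<le> k"
      using comps_hd_length_le by fastforce
    then show "rhs_coeff k 0 ks = 0"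
      by (simp add: rhs_coeff_def binomial_eq_0)
  qed
  then show "rhs k 0 u = 0"
    by (simp add: rhs_def zsum_zero)
qed

lemma rhs_at_Cons_X:
  assumes "1 \<le> k" "1 \<le> m"
  shows "rhs k m (X # u) = tvar * rhs k (m - 1) u + rhs (k - 1) m u"
proof -
  have "rhs k m (X # u) = zsum (\<lambda>ks. rhs_coeff k m (Suc (hd ks) # tl ks)) (k + m - 1) u"
    unfolding rhs_def by (simp add: zsum_at_Cons_X)
  also have "\<dots> = zsum (\<lambda>ks. tvar * rhs_coeff k (m - 1) ks + 1 * rhs_coeff (k - 1) m ks) (k + m - 1) u"
  proof (rule zsum_cong)
    fix ks
    assume ks: "ks \<in> comps (k + m - 1)"
    then obtain h r where hr: "ks = h # r"
      by (cases ks) (auto simp: comps_def)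
    let ?s = "(-1 :: rat poly) ^ (length ks - 1)"
    have "tvar ^ (m - length ks) * of_nat (h choose Suc k)
        = tvar * (tvar ^ (m - 1 - length ks) * of_nat (h choose Suc k))"
    proof (cases "Suc k \<le> h")
      case True
      then have "m - length ks = Suc (m - 1 - length ks)"
        using comps_hd_length_le[OF ks] hr assms by auto
      then show ?thesis
        by simp
    qed (simp add: binomial_eq_0)
    then have "rhs_coeff k m (Suc (hd ks) # tl ks)
        = tvar * (?s * (tvar ^ (m - 1 - length ks) * of_nat (h choose Suc k)))
          + ?s * tvar ^ (m - length ks) * of_nat (h choose k)"
      unfolding rhs_coeff_def using hr by (simp add: algebra_simps)
    also have "\<dots> = tvar * rhs_coeff k (m - 1) ks + 1 * rhs_coeff (k - 1) m ks"
      unfolding rhs_coeff_def using hr assms by (simp add: algebra_simps)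
    finally show "rhs_coeff k m (Suc (hd ks) # tl ks) = tvar * rhs_coeff k (m - 1) ks + 1 * rhs_coeff (k - 1) m ks" .
  qed
  also have "\<dots> = tvar * rhs k (m - 1) u + rhs (k - 1) m u"
    unfolding zsum_lincomb rhs_def using assms by (simp add: add.commute)
  finally show ?thesis .
qed

lemma rhs0_at_Cons_X:
  assumes "1 \<le> m"
  shows "rhs 0 m (X # u) = tvar * rhs 0 (m - 1) u + tvar * altsum (m - 1) u"
proof -
  have "rhs 0 m (X # u) = zsum (\<lambda>ks. rhs_coeff 0 m (Suc (hd ks) # tl ks)) (m - 1) u"
    unfolding rhs_def by (simp add: zsum_at_Cons_X)
  also have "\<dots> = zsum (\<lambda>ks. tvar * rhs_coeff 0 (m - 1) ks + tvar * alt_coeff (m - 1) ks) (m - 1) u"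
  proof (rule zsum_cong)
    fix ks
    assume ks: "ks \<in> comps (m - 1)"
    then obtain h r where "ks = h # r"
      by (cases ks) (auto simp: comps_def)
    moreover have "m - length ks = Suc (m - 1 - length ks)"
      using comps_length_le[OF ks] assms by auto
    ultimately show "rhs_coeff 0 m (Suc (hd ks) # tl ks) = tvar * rhs_coeff 0 (m - 1) ks + tvar * alt_coeff (m - 1) ks"
      unfolding rhs_coeff_def alt_coeff_def by (simp add: algebra_simps)
  qed
  also have "\<dots> = tvar * rhs 0 (m - 1) u + tvar * altsum (m - 1) u"
    unfolding zsum_lincomb rhs_def altsum_def by simp
  finally show ?thesis .
qed

lemma rhs_at_Cons_Y:
  assumes "1 \<le> k"
  shows "rhs k m (Y # u) = 0"
proof -
  have "zsum (\<lambda>ks. rhs_coeff k m (1 # ks)) (k + m - 1) u = zsum (\<lambda>ks. 0) (k + m - 1) u"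
    by (rule zsum_cong) (use assms in \<open>simp add: rhs_coeff_def binomial_eq_0\<close>)
  then show ?thesis
    using assms by (simp add: rhs_def zsum_at_Cons_Y rhs_coeff_def binomial_eq_0 zsum_zero)
qed

lemma rhs0_at_Cons_Y:
  assumes "1 \<le> m"
  shows "rhs 0 m (Y # u) = (if u = [] \<and> m = 1 then 1 else 0) - altsum (m - 1) u"
proof -
  have "zsum (\<lambda>ks. rhs_coeff 0 m (1 # ks)) (m - 1) u
      = zsum (\<lambda>ks. (-1) * alt_coeff (m - 1) ks + 0 * alt_coeff (m - 1) ks) (m - 1) u"
  proof (rule zsum_cong)
    fix ks
    assume "ks \<in> comps (m - 1)"
    then obtain L where "length ks = Suc L"
      by (cases ks) (auto simp: comps_def)
    then show "rhs_coeff 0 m (1 # ks) = (-1) * alt_coeff (m - 1) ks + 0 * alt_coeff (m - 1) ks"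
      unfolding rhs_coeff_def alt_coeff_def by simp
  qed
  also have "\<dots> = - altsum (m - 1) u"
    unfolding zsum_lincomb altsum_def by simp
  finally show ?thesis
    by (simp add: rhs_def zsum_at_Cons_Y rhs_coeff_def)
qed

lemma rhs_at_single_Y: "rhs k m [Y] = (if k = 0 \<and> m = 1 then 1 else 0)"
  unfolding rhs_def zsum_at_single_Y by (auto simp: rhs_coeff_def binomial_eq_0 add_is_1)

lemma h0t_rhs:
  assumes "1 \<le> k"
  shows "h0t (rhs k m)"
  unfolding h0t_def
proof (intro conjI ballI finite_supp_rhs)
  fix u
  assume "u \<in> supp (rhs k m)"
  then have "rhs k m u \<noteq> 0"
    by (simp add: supp_def)
  moreover have "hd u = X" if "u \<noteq> []"
    using that calculation rhs_at_Cons_Y[OF assms, of m] by (cases u; cases "hd u") auto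
  ultimately show "u = [] \<or> hd u = X \<and> last u = Y"
    by (auto simp: rhs_def zsum_def split: if_splits)
qed

lemma altsum_0 [simp]: "altsum 0 = (\<lambda>u. 0)"
  by (auto simp: altsum_def zsum_def)

lemma altsum_at_Nil [simp]: "altsum m [] = 0"
  by (simp add: altsum_def)

lemma finite_supp_altsum: "finite (supp (altsum m))"
  by (simp add: altsum_def finite_supp_zsum)

lemma altsum_at_Cons_X:
  assumes "1 \<le> m"
  shows "altsum m (X # u) = tvar * altsum (m - 1) u"
proof -
  have "zsum (\<lambda>ks. alt_coeff m (Suc (hd ks) # tl ks)) (m - 1) u
      = zsum (\<lambda>ks. tvar * alt_coeff (m - 1) ks + 0 * alt_coeff (m - 1) ks) (m - 1) u"
  proof (rule zsum_cong)
    fix ks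
    assume ks: "ks \<in> comps (m - 1)"
    then obtain h r where "ks = h # r"
      by (cases ks) (auto simp: comps_def)
    moreover have "m - length ks = Suc (m - 1 - length ks)"
      using comps_length_le[OF ks] assms by auto
    ultimately show "alt_coeff m (Suc (hd ks) # tl ks) = tvar * alt_coeff (m - 1) ks + 0 * alt_coeff (m - 1) ks"
      unfolding alt_coeff_def by (simp add: algebra_simps)
  qed
  also have "\<dots> = tvar * altsum (m - 1) u"
    unfolding zsum_lincomb altsum_def by simp
  finally show ?thesis
    by (simp add: altsum_def zsum_at_Cons_X)
qed

lemma altsum_at_Cons_Y:
  assumes "1 \<le> m"
  shows "altsum m (Y # u) = (if u = [] \<and> m = 1 then 1 else 0) - altsum (m - 1) u"
proof -
  have "zsum (\<lambda>ks. alt_coeff m (1 # ks)) (m - 1) u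
      = zsum (\<lambda>ks. (-1) * alt_coeff (m - 1) ks + 0 * alt_coeff (m - 1) ks) (m - 1) u"
  proof (rule zsum_cong)
    fix ks
    assume "ks \<in> comps (m - 1)"
    then obtain L where "length ks = Suc L"
      by (cases ks) (auto simp: comps_def)
    then show "alt_coeff m (1 # ks) = (-1) * alt_coeff (m - 1) ks + 0 * alt_coeff (m - 1) ks"
      unfolding alt_coeff_def by simp
  qed
  also have "\<dots> = - altsum (m - 1) u"
    unfolding zsum_lincomb altsum_def by simp
  finally show ?thesis
    by (simp add: altsum_def zsum_at_Cons_Y alt_coeff_def)
qed

lemma altsum_at_single_Y: "altsum m [Y] = (if m = 1 then 1 else 0)"
  unfolding altsum_def zsum_at_single_Y by (simp add: alt_coeff_def)

section \<open>Decomposition of the sum of words\<close>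

lemma yconv_0 [simp]: "yconv F 0 u = 0"
  by (simp add: yconv_def)

lemma yconv_at_Nil:
  assumes "\<And>m. finite (supp (F m))" "\<And>m. F m [] = 0"
  shows "yconv F n [] = 0"
  by (simp add: yconv_def tsh_at_Nil assms finite_supp_ydiv)

lemma yconv_cong: "(\<And>m. 1 \<le> m \<Longrightarrow> m \<le> n \<Longrightarrow> F m = G m) \<Longrightarrow> yconv F n u = yconv G n u"
  unfolding yconv_def by (rule sum.cong) auto

lemma yconv_lincomb:
  assumes "\<And>m. finite (supp (F1 m))" "\<And>m. finite (supp (F2 m))"
  shows "yconv (\<lambda>m v. p * F1 m v + q * F2 m v) n u = p * yconv F1 n u + q * yconv F2 n u"
  unfolding yconv_def
  by (simp add: tsh_lincomb_left assms finite_supp_ydiv sum.distrib sum_distrib_left)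

lemma yconv_shift:
  assumes "G 0 = (\<lambda>u. 0)" "1 \<le> n"
  shows "yconv (\<lambda>m. G (m - 1)) n u = yconv G (n - 1) u"
proof -
  obtain n' where "n = Suc n'"
    using assms(2) by (cases n) auto
  then show ?thesis
    using assms(1) by (simp add: yconv_def Suc_diff_le)
qed

lemma sum_lessThan_shift_down:
  fixes g :: "nat \<Rightarrow> nat \<Rightarrow> 'a::comm_monoid_add"
  shows "(\<Sum>i<n. if i = 0 then 0 else g (n - i) (i - 1)) = (\<Sum>j<n - 1. g (n - 1 - j) j)"
proof (cases n)
  case (Suc n')
  have "(\<Sum>i<Suc n'. if i = 0 then 0 else g (Suc n' - i) (i - 1)) = (\<Sum>i<n'. g (n' - i) i)"
    by (subst sum.lessThan_Suc_shift) simp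
  then show ?thesis
    unfolding Suc by simp
qed simp

lemma sum_lessThan_if_last:
  fixes f :: "nat \<Rightarrow> 'a::semiring_1"
  assumes "1 \<le> n"
  shows "(\<Sum>i<n. (if n - i = 1 then 1 else 0) * f i) = f (n - 1)"
proof -
  have "(\<Sum>i<n. (if n - i = 1 then 1 else 0) * f i) = (\<Sum>i<n. if i = n - 1 then f i else 0)"
    using assms by (intro sum.cong) auto
  then show ?thesis
    using assms by simp
qed

lemma yconv_at_Cons_Y:
  assumes "\<And>m. finite (supp (F m))"
  shows "yconv F n (Y # u) = yconv (\<lambda>m v. F m (Y # v)) n u + yconv F (n - 1) u"
proof -
  have "yconv F n (Y # u)
      = yconv (\<lambda>m v. F m (Y # v)) n u + (\<Sum>i<n. tsh (F (n - i)) (\<lambda>v. ydiv i (Y # v)) u)"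
    unfolding yconv_def by (simp add: tsh_at_Cons_Y[OF assms finite_supp_ydiv] sum.distrib)
  also have "(\<Sum>i<n. tsh (F (n - i)) (\<lambda>v. ydiv i (Y # v)) u)
      = (\<Sum>i<n. if i = 0 then 0 else tsh (F (n - i)) (ydiv (i - 1)) u)"
    by (rule sum.cong) (simp_all add: residual_Y_ydiv)
  also have "\<dots> = yconv F (n - 1) u"
    unfolding sum_lessThan_shift_down[where g = "\<lambda>a b. tsh (F a) (ydiv b) u"] yconv_def
    by (simp add: diff_diff_add add.commute)
  finally show ?thesis .
qed

lemma yconv_at_Cons_X:
  assumes "\<And>m. finite (supp (F m))" "\<And>m. F m [] = 0"
  shows "yconv F n (X # u) = yconv (\<lambda>m v. F m (X # v)) n u - tvar * yconv F (n - 1) u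
           - tvar * (\<Sum>i<n. F (n - i) [Y] * (if u = [] then 0 else ydiv i u))"
proof -
  define g where "g i = tsh (F (n - i)) (\<lambda>v. ydiv i (X # v)) u
    - tvar * ydiv i [Y] * (if u = [] then 0 else F (n - i) u)" for i
  have "yconv F n (X # u) = yconv (\<lambda>m v. F m (X # v)) n u + (\<Sum>i<n. g i)
          - tvar * (\<Sum>i<n. F (n - i) [Y] * (if u = [] then 0 else ydiv i u))"
    unfolding yconv_def g_def
    by (simp add: tsh_at_Cons_X[OF assms(1) finite_supp_ydiv] algebra_simps sum.distrib
        sum_subtractf sum_distrib_left)
  also have "(\<Sum>i<n. g i) = (\<Sum>i<n. if i = 0 then 0 else - tvar * tsh (F (n - i)) (ydiv (i - 1)) u)"
  proof (rule sum.cong)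
    fix i
    have "tsh (F (n - i)) (\<lambda>v. - tvar * ydiv (i - 1) v) u = - tvar * tsh (F (n - i)) (ydiv (i - 1)) u"
      by (rule tsh_scale_right) (simp_all add: assms finite_supp_ydiv)
    then show "g i = (if i = 0 then 0 else - tvar * tsh (F (n - i)) (ydiv (i - 1)) u)"
      by (cases "i \<le> 1")
        (auto simp: g_def residual_X_ydiv ydiv_at_single_Y tsh_single_Nil_right assms le_Suc_eq)
  qed simp
  also have "\<dots> = - tvar * yconv F (n - 1) u"
    unfolding sum_lessThan_shift_down[where g = "\<lambda>a b. - tvar * tsh (F a) (ydiv b) u"] yconv_def
    by (simp add: diff_diff_add add.commute sum_distrib_left)
  finally show ?thesis
    by simp
qed

lemma yconv_residual_Y_eq:
  assumes "\<And>m v. 1 \<le> m \<Longrightarrow> F m (Y # v) = (if v = [] \<and> m = 1 then 1 else 0) - altsum (m - 1) v"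
    and "1 \<le> n"
  shows "yconv (\<lambda>m v. F m (Y # v)) n u = ydiv (n - 1) u - yconv altsum (n - 1) u"
proof -
  have "yconv (\<lambda>m v. F m (Y # v)) n u
      = yconv (\<lambda>m v. (if m = 1 then 1 else 0) * single [] v + (-1) * altsum (m - 1) v) n u"
    by (rule yconv_cong) (auto simp: assms(1) single_def)
  also have "\<dots> = (\<Sum>i<n. (if n - i = 1 then 1 else 0) * ydiv i u) - yconv (\<lambda>m. altsum (m - 1)) n u"
    unfolding yconv_def
    by (subst tsh_lincomb_left)
      (simp_all add: finite_supp_altsum finite_supp_ydiv supp_single tsh_single_Nil_left
        sum.distrib sum_subtractf)
  also have "\<dots> = ydiv (n - 1) u - yconv altsum (n - 1) u"
    using yconv_shift[of altsum n u] sum_lessThan_if_last[OF assms(2), of "\<lambda>i. ydiv i u"] assms(2)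
    by simp
  finally show ?thesis .
qed

lemma yconv_altsum:
  assumes "1 \<le> M"
  shows "yconv altsum M = ydiv M"
proof (rule word_fun_eqI)
  show "yconv altsum M [] = ydiv M []"
    using assms by (simp add: yconv_at_Nil finite_supp_altsum ydiv_at_Nil)
next
  fix u
  show "yconv altsum M (Y # u) = ydiv M (Y # u)"
    using yconv_at_Cons_Y[of altsum M u] yconv_residual_Y_eq[of altsum M u] assms
    by (simp add: finite_supp_altsum altsum_at_Cons_Y ydiv_at_Cons_Y)
next
  fix u
  have "yconv (\<lambda>m v. altsum m (X # v)) M u = yconv (\<lambda>m v. tvar * altsum (m - 1) v + 0 * altsum m v) M u"
    by (rule yconv_cong) (auto simp: altsum_at_Cons_X)
  also have "\<dots> = tvar * yconv (\<lambda>m. altsum (m - 1)) M u"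
    by (subst yconv_lincomb) (simp_all add: finite_supp_altsum)
  also have "\<dots> = tvar * yconv altsum (M - 1) u"
    using assms yconv_shift[of altsum M u] by simp
  finally have "yconv altsum M (X # u) = - tvar * (if u = [] then 0 else ydiv (M - 1) u)"
    using yconv_at_Cons_X[of altsum M u] assms
      sum_lessThan_if_last[OF assms, of "\<lambda>i. if u = [] then 0 else ydiv i u"]
    by (simp add: finite_supp_altsum altsum_at_single_Y)
  then show "yconv altsum M (X # u) = ydiv M (X # u)"
    using assms by (auto simp: ydiv_at_Cons_X ydiv_at_Nil single_apply)
qed

definition ind_words :: "nat \<Rightarrow> nat \<Rightarrow> ht" where
  "ind_words k n u =
    (if (u = [] \<or> last u = Y) \<and> count_list u X = k \<and> count_list u Y = n then 1 else 0)"

lemma ind_words_at_Nil: "ind_words k n [] = (if k = 0 \<and> n = 0 then 1 else 0)"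
  by (simp add: ind_words_def)

lemma ind_words_at_Cons_X: "1 \<le> n \<Longrightarrow> ind_words k n (X # u) = (if k = 0 then 0 else ind_words (k - 1) n u)"
  by (cases "u = []") (auto simp: ind_words_def)

lemma ind_words_at_Cons_Y: "ind_words k n (Y # u) = (if n = 0 then 0 else ind_words k (n - 1) u)"
  by (cases "u = []") (auto simp: ind_words_def)

lemma ind_words_0: "ind_words k 0 u = (if k = 0 then single [] u else 0)"
proof (cases "u = []")
  case False
  then have "count_list u Y \<noteq> 0" if "last u = Y"
    using that last_in_set count_list_0_iff by metis
  then show ?thesis
    using False by (auto simp: ind_words_def single_apply)
qed (simp add: ind_words_def)

lemma yconv_rhs_at_Cons_Y:
  assumes "1 \<le> n"
  shows "yconv (rhs k) n (Y # u) = (if k = 0 \<and> n = 1 then single [] u else 0) + yconv (rhs k) (n - 1) u"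
proof -
  have "yconv (\<lambda>m v. rhs k m (Y # v)) n u = (if k = 0 \<and> n = 1 then single [] u else 0)"
  proof (cases "k = 0")
    case True
    then have "yconv (\<lambda>m v. rhs k m (Y # v)) n u = ydiv (n - 1) u - yconv altsum (n - 1) u"
      using yconv_residual_Y_eq[of "rhs 0" n u] rhs0_at_Cons_Y assms by simp
    then show ?thesis
      using True assms yconv_altsum[of "n - 1"] by (cases "n = 1") auto
  next
    case False
    then show ?thesis
      by (simp add: rhs_at_Cons_Y yconv_def)
  qed
  then show ?thesis
    using yconv_at_Cons_Y[of "rhs k" n u] by (simp add: finite_supp_rhs)
qed

lemma yconv_rhs0_at_Cons_X:
  assumes "1 \<le> n"
  shows "yconv (rhs 0) n (X # u) = 0"
proof -
  have "yconv (\<lambda>m v. rhs 0 m (X # v)) n u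
      = yconv (\<lambda>m v. tvar * rhs 0 (m - 1) v + tvar * altsum (m - 1) v) n u"
    by (rule yconv_cong) (simp add: rhs0_at_Cons_X)
  also have "\<dots> = tvar * yconv (\<lambda>m. rhs 0 (m - 1)) n u + tvar * yconv (\<lambda>m. altsum (m - 1)) n u"
    by (subst yconv_lincomb) (simp_all add: finite_supp_rhs finite_supp_altsum)
  also have "\<dots> = tvar * yconv (rhs 0) (n - 1) u + tvar * yconv altsum (n - 1) u"
    using yconv_shift[of "rhs 0" n u] yconv_shift[of altsum n u] assms by simp
  finally have "yconv (\<lambda>m v. rhs 0 m (X # v)) n u
      = tvar * yconv (rhs 0) (n - 1) u + tvar * yconv altsum (n - 1) u" .
  moreover have "(\<Sum>i<n. rhs 0 (n - i) [Y] * (if u = [] then 0 else ydiv i u))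
      = (if u = [] then 0 else ydiv (n - 1) u)"
    using sum_lessThan_if_last[OF assms, of "\<lambda>i. if u = [] then 0 else ydiv i u"]
    by (simp add: rhs_at_single_Y)
  moreover have "yconv altsum (n - 1) u = (if u = [] then 0 else ydiv (n - 1) u)"
    using assms by (cases "n = 1") (auto simp: yconv_altsum ydiv_at_Nil single_apply)
  ultimately show ?thesis
    using yconv_at_Cons_X[of "rhs 0" n u] by (simp add: finite_supp_rhs algebra_simps)
qed

lemma yconv_rhs_at_Cons_X:
  assumes "1 \<le> k" "1 \<le> n"
  shows "yconv (rhs k) n (X # u) = yconv (rhs (k - 1)) n u"
proof -
  have "yconv (\<lambda>m v. rhs k m (X # v)) n u = yconv (\<lambda>m v. tvar * rhs k (m - 1) v + 1 * rhs (k - 1) m v) n u"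
    by (rule yconv_cong) (use assms(1) in \<open>simp add: rhs_at_Cons_X\<close>)
  also have "\<dots> = tvar * yconv (\<lambda>m. rhs k (m - 1)) n u + yconv (rhs (k - 1)) n u"
    by (subst yconv_lincomb) (simp_all add: finite_supp_rhs)
  also have "\<dots> = tvar * yconv (rhs k) (n - 1) u + yconv (rhs (k - 1)) n u"
    using yconv_shift[of "rhs k" n u] assms(2) by simp
  finally show ?thesis
    using yconv_at_Cons_X[of "rhs k" n u] assms(1) by (simp add: finite_supp_rhs rhs_at_single_Y)
qed

lemma ind_words_eq_yconv_rhs: "1 \<le> n \<Longrightarrow> ind_words k n = yconv (rhs k) n"
proof (induction "k + n" arbitrary: k n rule: less_induct)
  case less
  show ?case
  proof (rule word_fun_eqI)
    show "ind_words k n [] = yconv (rhs k) n []"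
      using less.prems by (simp add: ind_words_at_Nil yconv_at_Nil finite_supp_rhs)
  next
    fix u
    show "ind_words k n (Y # u) = yconv (rhs k) n (Y # u)"
    proof (cases "n = 1")
      case True
      then show ?thesis
        by (simp add: ind_words_at_Cons_Y ind_words_0 yconv_rhs_at_Cons_Y)
    next
      case False
      then have "ind_words k (n - 1) = yconv (rhs k) (n - 1)"
        using less.prems by (intro less.hyps) auto
      then show ?thesis
        using False less.prems by (simp add: ind_words_at_Cons_Y yconv_rhs_at_Cons_Y)
    qed
  next
    fix u
    show "ind_words k n (X # u) = yconv (rhs k) n (X # u)"
    proof (cases "k = 0")
      case False
      then have "ind_words (k - 1) n = yconv (rhs (k - 1)) n"
        using less.prems by (intro less.hyps) auto
      then show ?thesis
        using False less.prems by (simp add: ind_words_at_Cons_X yconv_rhs_at_Cons_X)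
    qed (use less.prems in \<open>simp add: ind_words_at_Cons_X yconv_rhs0_at_Cons_X\<close>)
  qed
qed

lemma length_eq_count_list_X_Y: "length u = count_list u X + count_list u Y"
proof (induction u)
  case (Cons a u)
  then show ?case by (cases a) auto
qed simp

lemma sum_single_eq_ind_words:
  "(\<lambda>u. \<Sum>w\<in>{w. (w = [] \<or> last w = Y) \<and> count_list w X = k \<and> count_list w Y = n}. single w u)
    = ind_words k n"
proof
  fix u
  let ?W = "{w. (w = [] \<or> last w = Y) \<and> count_list w X = k \<and> count_list w Y = n}"
  have "?W \<subseteq> {u. length u = k + n}"
    using length_eq_count_list_X_Y by auto
  then have "finite ?W"
    using finite_words_of_length finite_subset by blast
  then show "(\<Sum>w\<in>?W. single w u) = ind_words k n u"
    by (simp add: single_apply ind_words_def)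
qed

lemma UN_comps_by_length:
  "(\<Union>i\<in>{1..n}. {ks. length ks = i \<and> (\<forall>j\<in>set ks. 1 \<le> j) \<and> sum_list ks = k + n \<and> k + 1 \<le> hd ks})
    = {ks \<in> comps (k + n). k + 1 \<le> hd ks}"
proof (intro equalityI subsetI)
  fix ks
  assume "ks \<in> (\<Union>i\<in>{1..n}. {ks. length ks = i \<and> (\<forall>j\<in>set ks. 1 \<le> j) \<and> sum_list ks = k + n \<and> k + 1 \<le> hd ks})"
  then show "ks \<in> {ks \<in> comps (k + n). k + 1 \<le> hd ks}"
    by (auto simp: comps_def)
next
  fix ks
  assume ks: "ks \<in> {ks \<in> comps (k + n). k + 1 \<le> hd ks}"
  then have "length ks \<in> {1..n}"
    using comps_hd_length_le[of ks "k + n"] comps_ne_Nil[of ks "k + n"] by (cases ks) auto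
  with ks show "ks \<in> (\<Union>i\<in>{1..n}. {ks. length ks = i \<and> (\<forall>j\<in>set ks. 1 \<le> j) \<and> sum_list ks = k + n \<and> k + 1 \<le> hd ks})"
    by (auto simp: comps_def)
qed

lemma rhs_eq_sum_single:
  "(\<lambda>u. \<Sum>i=1..n. (-1) ^ (i - 1) * [:0, 1:] ^ (n - i) *
      (\<Sum>ks\<in>{ks. length ks = i \<and> (\<forall>j\<in>set ks. 1 \<le> j) \<and> sum_list ks = k + n \<and> k + 1 \<le> hd ks}.
         of_nat (hd ks choose (k + 1)) * single (zw ks) u))
    = rhs k n"
proof
  fix u
  define K where "K i = {ks. length ks = i \<and> (\<forall>j\<in>set ks. 1 \<le> j) \<and> sum_list ks = k + n \<and> k + 1 \<le> hd ks}"
    for i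
  have K_finite: "finite (K i)" if "1 \<le> i" for i
    using that by (intro finite_subset[OF _ finite_comps[of "k + n"]]) (auto simp: K_def comps_def)
  have "(\<Sum>i=1..n. (-1) ^ (i - 1) * [:0, 1:] ^ (n - i) *
          (\<Sum>ks\<in>K i. of_nat (hd ks choose (k + 1)) * single (zw ks) u))
      = (\<Sum>i=1..n. \<Sum>ks\<in>K i. rhs_coeff k n ks * single (zw ks) u)"
    by (intro sum.cong refl)
      (auto simp: sum_distrib_left rhs_coeff_def tvar_def K_def mult.assoc intro!: sum.cong)
  also have "\<dots> = (\<Sum>ks\<in>(\<Union>i\<in>{1..n}. K i). rhs_coeff k n ks * single (zw ks) u)"
    by (rule sum.UNION_disjoint[symmetric]) (use K_finite in \<open>auto simp: K_def\<close>)
  also have "\<dots> = (\<Sum>ks\<in>{ks \<in> comps (k + n). k + 1 \<le> hd ks}. rhs_coeff k n ks * single (zw ks) u)"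
    unfolding K_def UN_comps_by_length ..
  also have "\<dots> = (\<Sum>ks\<in>comps (k + n). rhs_coeff k n ks * single (zw ks) u)"
    by (rule sum.mono_neutral_left) (auto simp: finite_comps rhs_coeff_def binomial_eq_0)
  also have "\<dots> = rhs k n u"
    by (simp add: rhs_def zsum_eq_sum_single)
  finally show "(\<Sum>i=1..n. (-1) ^ (i - 1) * [:0, 1:] ^ (n - i) *
          (\<Sum>ks\<in>K i. of_nat (hd ks choose (k + 1)) * single (zw ks) u)) = rhs k n u" .
qed

theorem lemma3p3:
  fixes k n :: nat
  assumes "1 \<le> k" and "1 \<le> n"
  shows "reg (\<lambda>u. \<Sum>w\<in>{w. (w = [] \<or> last w = Y) \<and> count_list w X = k \<and> count_list w Y = n}.
                    single w u)
       = (\<lambda>u. \<Sum>i=1..n. (-1) ^ (i - 1) * [:0, 1:] ^ (n - i) *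
            (\<Sum>ks\<in>{ks. length ks = i \<and> (\<forall>j\<in>set ks. 1 \<le> j) \<and> sum_list ks = k + n \<and> k + 1 \<le> hd ks}.
               of_nat (hd ks choose (k + 1)) * single (zw ks) u))"
proof -
  have "reg (yconv (rhs k) n) = rhs k n"
    using h0t_rhs[OF assms(1)] assms(2) by (rule reg_yconv)
  then show ?thesis
    unfolding sum_single_eq_ind_words rhs_eq_sum_single ind_words_eq_yconv_rhs[OF assms(2)] .
qed

end
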